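(* For every $M\ge \frac52$, every deterministic semi-online algorithm with migration factor $M$ for scheduling on two hierarchical machines with known optimal makespan (bin stretching) has competitive ratio at least $1+\frac{2}{2M+3}=\frac{2M+5}{2M+3}$.
   Context: Model (two hierarchical machines with migration, bin stretching). Jobs $1,2,\dots,n$ arrive one by one ($n$ unknown in advance). Job $j$ has a size $p_j>0$ and a grade of service (GoS) $g_j\in\{1,2\}$; a job of GoS $1$ may only be processed on machine $m_1$, a job of GoS $2$ may be processed on $m_1$ or on $m_2$. The load of a machine is the total size of the jobs assigned to it, and the makespan is the maximum load. When job $j$ arrives, the algorithm must assign it to a machine, and at the same time it may reassign (migrate) previously arrived jobs to other machines (respecting the GoS constraints), provided that the total size of the migrated jobs is at most $M\cdot p_j$; $M\ge 0$ is the migration factor. Bin stretching: the optimal offline makespan of the complete input is known in advance to the algorithm (and scaled to $1$). The competitive ratio of an algorithm is the supremum over inputs of (algorithm's makespan)/(optimal makespan). *)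

theory Defs
  imports Complex_Main
begin

text \<open>A job is a pair (size, GoS). Machines are numbered 1 and 2.
  An input is a finite list of jobs (released in list order).
  An assignment maps job indices (positions in the list) to machines.\<close>

type_synonym job = "real \<times> nat"
type_synonym assignment = "nat \<Rightarrow> nat"

definition valid_input :: "job list \<Rightarrow> bool" where
  "valid_input \<sigma> \<longleftrightarrow> (\<forall>j \<in> set \<sigma>. fst j > 0 \<and> snd j \<in> {1, 2})"

definition feasible :: "job list \<Rightarrow> assignment \<Rightarrow> bool" where
  "feasible \<sigma> a \<longleftrightarrow>
     (\<forall>i < length \<sigma>. a i \<in> {1, 2} \<and> (snd (\<sigma> ! i) = 1 \<longrightarrow> a i = 1))"

definition load :: "job list \<Rightarrow> assignment \<Rightarrow> nat \<Rightarrow> real" where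
  "load \<sigma> a k = (\<Sum>i \<in> {i. i < length \<sigma> \<and> a i = k}. fst (\<sigma> ! i))"

definition makespan :: "job list \<Rightarrow> assignment \<Rightarrow> real" where
  "makespan \<sigma> a = max (load \<sigma> a 1) (load \<sigma> a 2)"

definition opt :: "job list \<Rightarrow> real" where
  "opt \<sigma> = (INF a \<in> {a. feasible \<sigma> a}. makespan \<sigma> a)"

definition migrated :: "job list \<Rightarrow> assignment \<Rightarrow> assignment \<Rightarrow> real" where
  "migrated \<sigma> a b = (\<Sum>i \<in> {i. i < length \<sigma> \<and> a i \<noteq> b i}. fst (\<sigma> ! i))"

text \<open>A deterministic semi-online algorithm (bin stretching: the optimal makespan
  of the full input is known and scaled to 1) is a function ALG that maps the
  prefix of jobs seen so far to the current assignment of all these jobs.\<close>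
definition valid_alg :: "real \<Rightarrow> (job list \<Rightarrow> assignment) \<Rightarrow> bool" where
  "valid_alg M ALG \<longleftrightarrow>
     (\<forall>\<sigma>. valid_input \<sigma> \<and> opt \<sigma> = 1 \<longrightarrow>
        (\<forall>k. 1 \<le> k \<and> k \<le> length \<sigma> \<longrightarrow>
           feasible (take k \<sigma>) (ALG (take k \<sigma>)) \<and>
           migrated (take (k - 1) \<sigma>) (ALG (take (k - 1) \<sigma>)) (ALG (take k \<sigma>))
             \<le> M * fst (\<sigma> ! (k - 1))))"

definition comp_ratio_at_least :: "(job list \<Rightarrow> assignment) \<Rightarrow> real \<Rightarrow> bool" where
  "comp_ratio_at_least ALG c \<longleftrightarrow>
     (\<forall>r. (\<forall>\<sigma>. valid_input \<sigma> \<and> opt \<sigma> = 1 \<longrightarrow> makespan \<sigma> (ALG \<sigma>) \<le> r * opt \<sigma>) \<longrightarrow> c \<le> r)"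

end

theory Submission
  imports Defs
begin

text \<open>Let \<open>e < 2/(2M+3)\<close>, so that \<open>e \<le> 1/4\<close> when \<open>M \<ge> 5/2\<close>. The adversary releases two GoS-2 jobs of
  sizes \<open>1-2e\<close> and \<open>1-e\<close>. If the algorithm does not put the smaller one on \<open>m\<^sub>1\<close> and the larger
  one on \<open>m\<^sub>2\<close>, four GoS-1 jobs of size \<open>e/2\<close> follow; their migration budget \<open>Me/2\<close> is too
  small to move either large job, and every resulting schedule has makespan at least \<open>1+e\<close>.
  Otherwise a GoS-2 job of size \<open>2e\<close> follows, whose budget \<open>2Me < 2-3e\<close> does not allow
  swapping both large jobs, and then two GoS-1 jobs of size \<open>e/2\<close> that allow no migration of
  large jobs at all; again every reachable schedule has makespan at least \<open>1+e\<close>. Both inputs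
  have optimum 1, and letting \<open>e\<close> tend to \<open>2/(2M+3)\<close> gives the bound.\<close>

lemma load_as_sum: "load \<sigma> a k = (\<Sum>i<length \<sigma>. if a i = k then fst (\<sigma> ! i) else 0)"
  by (simp add: load_def sum.inter_filter[symmetric] lessThan_def)

lemma opt_eqI:
  assumes "feasible \<sigma> a" "makespan \<sigma> a = c" "\<And>b. feasible \<sigma> b \<Longrightarrow> c \<le> makespan \<sigma> b"
  shows "opt \<sigma> = c"
  unfolding opt_def using assms by (intro cInf_eq_minimum) auto

lemma sum_moved_le_migrated:
  assumes "S \<subseteq> {i. i < length \<sigma> \<and> a i \<noteq> b i}" and "valid_input \<sigma>"
  shows "(\<Sum>i\<in>S. fst (\<sigma> ! i)) \<le> migrated \<sigma> a b"
  unfolding migrated_def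
proof (rule sum_mono2[OF _ assms(1)])
  show "0 \<le> fst (\<sigma> ! i)" if "i \<in> {i. i < length \<sigma> \<and> a i \<noteq> b i} - S" for i
    using that assms(2) by (auto simp: valid_input_def less_imp_le)
qed simp

lemma heavy_job_not_migrated:
  assumes "migrated \<sigma> a b < fst (\<sigma> ! i)" "i < length \<sigma>" "valid_input \<sigma>"
  shows "a i = b i"
  using sum_moved_le_migrated[of "{i}" \<sigma> a b] assms by force

lemma valid_input_take: "valid_input \<sigma> \<Longrightarrow> valid_input (take k \<sigma>)"
  by (auto simp: valid_input_def dest: in_set_takeD)

lemma valid_alg_step:
  assumes "valid_alg M ALG" "valid_input \<sigma>" "opt \<sigma> = 1" "k < length \<sigma>"
  shows "feasible (take (Suc k) \<sigma>) (ALG (take (Suc k) \<sigma>)) \<and>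
    migrated (take k \<sigma>) (ALG (take k \<sigma>)) (ALG (take (Suc k) \<sigma>)) \<le> M * fst (\<sigma> ! k)"
  using assms unfolding valid_alg_def
  by (metis Suc_leI diff_Suc_1 le_add1 plus_1_eq_Suc)

lemma valid_alg_feasible:
  assumes "valid_alg M ALG" "valid_input \<sigma>" "opt \<sigma> = 1" "\<sigma> \<noteq> []"
  shows "feasible \<sigma> (ALG \<sigma>)"
  using conjunct1[OF valid_alg_step[OF assms(1-3), of "length \<sigma> - 1"]] assms(4) by simp

lemma valid_alg_keeps_heavy_job:
  assumes alg: "valid_alg M ALG" and \<sigma>: "valid_input \<sigma>" "opt \<sigma> = 1"
    and "i < j" "j \<le> k" "k \<le> length \<sigma>"
    and light: "\<And>l. j \<le> l \<Longrightarrow> l < k \<Longrightarrow> M * fst (\<sigma> ! l) < fst (\<sigma> ! i)"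
  shows "ALG (take k \<sigma>) i = ALG (take j \<sigma>) i"
  using \<open>j \<le> k\<close> \<open>k \<le> length \<sigma>\<close> light
proof (induction k rule: dec_induct)
  case (step k)
  have "i < length (take k \<sigma>)" using \<open>i < j\<close> step by simp
  moreover have "migrated (take k \<sigma>) (ALG (take k \<sigma>)) (ALG (take (Suc k) \<sigma>)) \<le> M * fst (\<sigma> ! k)"
    using conjunct2[OF valid_alg_step[OF alg \<sigma>]] step by simp
  moreover have "M * fst (\<sigma> ! k) < fst (take k \<sigma> ! i)"
    using step \<open>i < j\<close> by simp
  ultimately have "ALG (take k \<sigma>) i = ALG (take (Suc k) \<sigma>) i"
    by (meson heavy_job_not_migrated le_less_trans valid_input_take \<sigma>(1))
  with step show ?case by simp
qed simp

definition first_pair :: "real \<Rightarrow> job list" where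
  "first_pair e = [(1 - 2 * e, 2), (1 - e, 2)]"

definition unsplit_adversary :: "real \<Rightarrow> job list" where
  "unsplit_adversary e = first_pair e @ [(e / 2, 1), (e / 2, 1), (e / 2, 1), (e / 2, 1)]"

definition split_adversary :: "real \<Rightarrow> job list" where
  "split_adversary e = first_pair e @ [(2 * e, 2), (e / 2, 1), (e / 2, 1)]"

lemma valid_input_unsplit_adversary: "0 < e \<Longrightarrow> e < 1 / 2 \<Longrightarrow> valid_input (unsplit_adversary e)"
  by (simp add: valid_input_def unsplit_adversary_def first_pair_def)

lemma valid_input_split_adversary: "0 < e \<Longrightarrow> e < 1 / 2 \<Longrightarrow> valid_input (split_adversary e)"
  by (simp add: valid_input_def split_adversary_def first_pair_def)

lemma feasible_unsplit_adversary_iff: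
  "feasible (unsplit_adversary e) a \<longleftrightarrow>
     a 0 \<in> {1, 2} \<and> a 1 \<in> {1, 2} \<and> a 2 = 1 \<and> a 3 = 1 \<and> a 4 = 1 \<and> a 5 = 1"
  by (simp add: feasible_def unsplit_adversary_def first_pair_def numeral_eq_Suc All_less_Suc) blast

lemma feasible_split_adversary_iff:
  "feasible (split_adversary e) a \<longleftrightarrow>
     a 0 \<in> {1, 2} \<and> a 1 \<in> {1, 2} \<and> a 2 \<in> {1, 2} \<and> a 3 = 1 \<and> a 4 = 1"
  by (simp add: feasible_def split_adversary_def first_pair_def numeral_eq_Suc All_less_Suc) blast

lemma load_unsplit_adversary:
  "load (unsplit_adversary e) a k = (if a 0 = k then 1 - 2 * e else 0) + (if a 1 = k then 1 - e else 0)
     + (if a 2 = k then e / 2 else 0) + (if a 3 = k then e / 2 else 0)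
     + (if a 4 = k then e / 2 else 0) + (if a 5 = k then e / 2 else 0)"
  by (simp add: load_as_sum unsplit_adversary_def first_pair_def numeral_eq_Suc lessThan_Suc)

lemma load_split_adversary:
  "load (split_adversary e) a k = (if a 0 = k then 1 - 2 * e else 0) + (if a 1 = k then 1 - e else 0)
     + (if a 2 = k then 2 * e else 0) + (if a 3 = k then e / 2 else 0) + (if a 4 = k then e / 2 else 0)"
  by (simp add: load_as_sum split_adversary_def first_pair_def numeral_eq_Suc lessThan_Suc)

lemma makespan_unsplit_adversary_ge:
  assumes "0 < e" "e \<le> 1 / 4" "feasible (unsplit_adversary e) a" "\<not> (a 0 = 1 \<and> a 1 = 2)"
  shows "1 + e \<le> makespan (unsplit_adversary e) a"
  using assms by (auto simp: feasible_unsplit_adversary_iff makespan_def load_unsplit_adversary le_max_iff_disj)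

lemma makespan_split_adversary_ge:
  assumes "0 < e" "e \<le> 1 / 4" "feasible (split_adversary e) a" "\<not> (a 0 = 2 \<and> a 1 = 1)"
  shows "1 + e \<le> makespan (split_adversary e) a"
  using assms by (auto simp: feasible_split_adversary_iff makespan_def load_split_adversary le_max_iff_disj)

lemma opt_unsplit_adversary:
  assumes "0 < e" "e \<le> 1 / 4"
  shows "opt (unsplit_adversary e) = 1"
proof (rule opt_eqI)
  let ?a = "\<lambda>i. if i = 1 then 2 else 1"
  show "feasible (unsplit_adversary e) ?a" by (simp add: feasible_unsplit_adversary_iff)
  show "makespan (unsplit_adversary e) ?a = 1"
    using assms by (simp add: makespan_def load_unsplit_adversary)
  show "1 \<le> makespan (unsplit_adversary e) b" if "feasible (unsplit_adversary e) b" for b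
  proof (cases "b 0 = 1 \<and> b 1 = 2")
    case True
    with that show ?thesis
      by (simp add: feasible_unsplit_adversary_iff makespan_def load_unsplit_adversary)
  next
    case False
    with makespan_unsplit_adversary_ge[OF assms that] assms show ?thesis by simp
  qed
qed

lemma opt_split_adversary:
  assumes "0 < e" "e \<le> 1 / 4"
  shows "opt (split_adversary e) = 1"
proof (rule opt_eqI)
  let ?a = "\<lambda>i. if i = 1 \<or> 3 \<le> i then 1 else 2"
  show "feasible (split_adversary e) ?a" by (simp add: feasible_split_adversary_iff)
  show "makespan (split_adversary e) ?a = 1"
    using assms by (simp add: makespan_def load_split_adversary)
  show "1 \<le> makespan (split_adversary e) b" if "feasible (split_adversary e) b" for b
  proof (cases "b 0 = 2 \<and> b 1 = 1")
    case True
    with that assms show ?thesis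
      by (auto simp: feasible_split_adversary_iff makespan_def load_split_adversary le_max_iff_disj)
  next
    case False
    with makespan_split_adversary_ge[OF assms that] assms show ?thesis by simp
  qed
qed

lemma unsplit_first_pair_forces_ratio:
  assumes alg: "valid_alg M ALG" and e: "0 < e" "e \<le> 1 / 4" and budget: "(2 * M + 3) * e < 2"
    and unsplit: "\<not> (ALG (first_pair e) 0 = 1 \<and> ALG (first_pair e) 1 = 2)"
  shows "1 + e \<le> makespan (unsplit_adversary e) (ALG (unsplit_adversary e))"
proof -
  let ?\<sigma> = "unsplit_adversary e"
  have \<sigma>: "valid_input ?\<sigma>" "opt ?\<sigma> = 1"
    using e valid_input_unsplit_adversary opt_unsplit_adversary by auto
  have kept: "ALG ?\<sigma> i = ALG (first_pair e) i" if "i < 2" for i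
  proof -
    have "M * fst (?\<sigma> ! l) < fst (?\<sigma> ! i)" if "2 \<le> l" "l < 6" for l
    proof -
      from that have "l \<in> {2, 3, 4, 5}" by auto
      with \<open>i < 2\<close> e budget show ?thesis
        by (auto simp: unsplit_adversary_def first_pair_def less_2_cases_iff algebra_simps)
    qed
    from valid_alg_keeps_heavy_job[OF alg \<sigma> \<open>i < 2\<close>, of 6, OF _ _ this]
    show ?thesis by (simp add: unsplit_adversary_def first_pair_def)
  qed
  have "feasible ?\<sigma> (ALG ?\<sigma>)"
    using valid_alg_feasible[OF alg \<sigma>] by (simp add: unsplit_adversary_def)
  with e show ?thesis
    by (rule makespan_unsplit_adversary_ge) (use kept[of 0] kept[of 1] unsplit in simp)
qed

lemma split_first_pair_forces_ratio:
  assumes alg: "valid_alg M ALG" and e: "0 < e" "e \<le> 1 / 4" and budget: "(2 * M + 3) * e < 2"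
    and split: "ALG (first_pair e) 0 = 1 \<and> ALG (first_pair e) 1 = 2"
  shows "1 + e \<le> makespan (split_adversary e) (ALG (split_adversary e))"
proof -
  let ?\<sigma> = "split_adversary e"
  let ?a = "ALG (take 3 ?\<sigma>)"
  have \<sigma>: "valid_input ?\<sigma>" "opt ?\<sigma> = 1"
    using e valid_input_split_adversary opt_split_adversary by auto
  have kept: "ALG ?\<sigma> i = ?a i" if "i < 2" for i
  proof -
    have "M * fst (?\<sigma> ! l) < fst (?\<sigma> ! i)" if "3 \<le> l" "l < 5" for l
    proof -
      from that have "l \<in> {3, 4}" by auto
      with \<open>i < 2\<close> e budget show ?thesis
        by (auto simp: split_adversary_def first_pair_def less_2_cases_iff algebra_simps)
    qed
    from valid_alg_keeps_heavy_job[OF alg \<sigma>, of i 3 5, OF _ _ _ this] \<open>i < 2\<close>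
    show ?thesis by (simp add: split_adversary_def first_pair_def)
  qed
  have not_swapped: "\<not> (?a 0 = 2 \<and> ?a 1 = 1)"
  proof
    assume swapped: "?a 0 = 2 \<and> ?a 1 = 1"
    have "(\<Sum>i\<in>{0, 1}. fst (take 2 ?\<sigma> ! i)) \<le> migrated (take 2 ?\<sigma>) (ALG (take 2 ?\<sigma>)) ?a"
      using swapped split \<sigma>(1)
      by (intro sum_moved_le_migrated valid_input_take) (auto simp: split_adversary_def first_pair_def)
    also have "\<dots> \<le> M * (2 * e)"
      using conjunct2[OF valid_alg_step[OF alg \<sigma>, of 2]] by (simp add: split_adversary_def first_pair_def)
    finally show False
      using budget by (simp add: split_adversary_def first_pair_def algebra_simps)
  qed
  have "feasible ?\<sigma> (ALG ?\<sigma>)"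
    using valid_alg_feasible[OF alg \<sigma>] by (simp add: split_adversary_def)
  with e show ?thesis
    by (rule makespan_split_adversary_ge) (use kept[of 0] kept[of 1] not_swapped in simp)
qed

lemma adversary_forces_ratio:
  assumes "valid_alg M ALG" "0 < e" "e \<le> 1 / 4" "(2 * M + 3) * e < 2"
  obtains \<sigma> where "valid_input \<sigma>" "opt \<sigma> = 1" "1 + e \<le> makespan \<sigma> (ALG \<sigma>)"
proof (cases "ALG (first_pair e) 0 = 1 \<and> ALG (first_pair e) 1 = 2")
  case True
  with assms show ?thesis
    by (intro that[of "split_adversary e"] valid_input_split_adversary opt_split_adversary
        split_first_pair_forces_ratio) auto
next
  case False
  with assms show ?thesis
    by (intro that[of "unsplit_adversary e"] valid_input_unsplit_adversary opt_unsplit_adversary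
        unsplit_first_pair_forces_ratio) auto
qed

theorem mainTheorem4:
  fixes M :: real and ALG :: "job list \<Rightarrow> assignment"
  assumes "M \<ge> 5 / 2"
    and "valid_alg M ALG"
  shows "comp_ratio_at_least ALG ((2 * M + 5) / (2 * M + 3))"
  unfolding comp_ratio_at_least_def
proof (intro allI impI)
  fix r
  assume bounded: "\<forall>\<sigma>. valid_input \<sigma> \<and> opt \<sigma> = 1 \<longrightarrow> makespan \<sigma> (ALG \<sigma>) \<le> r * opt \<sigma>"
  have pos: "0 < 2 * M + 3" using assms(1) by simp
  have "1 + 2 / (2 * M + 3) \<le> r"
  proof (rule dense_le_bounded)
    show "1 < 1 + 2 / (2 * M + 3)" using pos by simp
    fix w assume "1 < w" "w < 1 + 2 / (2 * M + 3)"
    moreover have "2 / (2 * M + 3) \<le> 1 / 4" using assms(1) by (simp add: field_simps)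
    ultimately have "0 < w - 1" "w - 1 \<le> 1 / 4" by linarith+
    moreover have "(2 * M + 3) * (w - 1) < 2"
      using \<open>w < 1 + 2 / (2 * M + 3)\<close> pos by (simp add: field_simps)
    ultimately obtain \<sigma> where "valid_input \<sigma>" "opt \<sigma> = 1" "1 + (w - 1) \<le> makespan \<sigma> (ALG \<sigma>)"
      by (rule adversary_forces_ratio[OF assms(2)])
    moreover from bounded this(1,2) have "makespan \<sigma> (ALG \<sigma>) \<le> r" by simp
    ultimately show "w \<le> r" by simp
  qed
  moreover have "(2 * M + 5) / (2 * M + 3) = 1 + 2 / (2 * M + 3)" using pos by (simp add: field_simps)
  ultimately show "(2 * M + 5) / (2 * M + 3) \<le> r" by simp
qed

end
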